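(* Let $G_{\|v_0}$ be an initialized Borel game, let $\lambda$ be a requirement on $G$ and let $i\in\Pi$. Then the abstract negotiation game $\mathrm{Abs}_{\lambda i}(G)_{\|[v_0]}$ satisfies $$\inf_{\tau_\mathbb{P}}\ \sup_{\tau_\mathbb{C}}\ \nu_\mathbb{C}\big(\langle\tau_\mathbb{P},\tau_\mathbb{C}\rangle_{[v_0]}\big)=\inf_{\bar\sigma_{-i}\in\lambda\mathrm{Rat}_i(v_0)}\ \sup_{\sigma_i}\ \mu_i\big(\langle\bar\sigma_{-i},\sigma_i\rangle_{v_0}\big).$$
   Context: A game is a tuple $G=(\Pi,V,(V_i)_{i\in\Pi},E,\mu)$ where $\Pi$ is a finite set of players, $(V,E)$ is a finite directed graph in which every vertex has at least one outgoing edge, $(V_i)_{i\in\Pi}$ is a partition of $V$, and $\mu:V^\omega\to\mathbb{R}^\Pi$ is the outcome function; $G$ is Borel if $\mu$ is Borel measurable ($V^\omega$ with the product topology). Plays, histories, strategies, profiles, compatibility and $\langle\bar\sigma\rangle_v$ are as usual; $-i=\Pi\setminus\{i\}$; $\bar\sigma_{\|hw}$ is the profile with $\sigma_{j\|hw}(h')=\sigma_j(hh')$. A requirement is a map $\lambda:V\to\mathbb{R}\cup\{\pm\infty\}$. A play $\rho$ is $\lambda$-consistent if for every $j\in\Pi$ and $n$ with $\rho_n\in V_j$, $\mu_j(\rho_n\rho_{n+1}\cdots)\ge\lambda(\rho_n)$. $\lambda\mathrm{Rat}_i(v)$ is the set of profiles $\bar\sigma_{-i}$ in $G_{\|v}$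 for which there exists $\sigma_i$ such that for every history $hw$ from $v$ compatible with $\bar\sigma_{-i}$, $\langle\bar\sigma_{\|hw}\rangle_w$ is $\lambda$-consistent; $\inf\emptyset=+\infty$. The abstract negotiation game $\mathrm{Abs}_{\lambda i}(G)_{\|[v_0]}$ is a two-player zero-sum game between Prover $\mathbb{P}$ and Challenger $\mathbb{C}$. Challenger's states are $[\rho]$ for $\rho$ a $\lambda$-consistent play of $G$. Prover's states are $[hv]$ for $hv$ a history of $G$ with $h$ ending in $V_i$, states $[v]$ for $v\in V$, and two extra states $\top,\bot$. The initial state is $[v_0]$. Transitions: $[hv]\to[v\rho]$ whenever $v\rho$ is a $\lambda$-consistent play starting at $v$ (Prover proposes a play); $[\rho]\to[\rho_0\cdots\rho_nv]$ whenever $\rho_n\in V_i$, $\rho_nv\in E$ and $v\neq\rho_{n+1}$ (Challenger makes player $i$ deviate); $[\rho]\to\top$ (Challenger accepts); $[hv]\to\bot$ for every Prover state $[hv]$ or $[v]$; and self-loops $\top\to\top$, $\bot\to\bot$. Writing a play of this game as $[v_0][\rho^{(0)}][h^{(1)}v_1][\rho^{(1)}]\cdots$, where each $h^{(k)}v_k$ is the Prover state reached after the $k$-th deviation (so $h^{(k)}$ is the prefix of $\rho^{(k-1)}$ up to the deviation vertex), the outcome for Challenger is: $\nu_\mathbb{C}([v_0][\rho^{(0)}][h^{(1)}v_1][\rho^{(1)}]\cdots[h^{(k)}v_k][\rho^{(k)}]\top^\omega)=\mu_i(h^{(1)}\cdots h^{(k)}\rho^{(k)})$; $\nu_\mathbb{C}([v_0][\rho^{(0)}][h^{(1)}v_1][\rho^{(1)}]\cdots)=\mu_i(h^{(1)}h^{(2)}\cdots)$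 for plays with infinitely many deviations; $\nu_\mathbb{C}(H\bot^\omega)=+\infty$; and $\nu_\mathbb{P}=-\nu_\mathbb{C}$. $\langle\tau_\mathbb{P},\tau_\mathbb{C}\rangle_{[v_0]}$ is the play generated by strategies $\tau_\mathbb{P},\tau_\mathbb{C}$. *)

theory Defs
  imports "HOL-Probability.Probability" "HOL-Library.Omega_Words_Fun"
begin

(* A game: vertices = finite type 'v, players = finite type 'p,
   E edge relation, own v = the player controlling v (partition (V_j)),
   mu j = outcome of player j (a real on V^omega = nat => 'v). *)

definition is_play :: "('v \<times> 'v) set \<Rightarrow> (nat \<Rightarrow> 'v) \<Rightarrow> bool" where
  "is_play E \<rho> \<longleftrightarrow> (\<forall>n. (\<rho> n, \<rho> (Suc n)) \<in> E)"

definition is_hist :: "('v \<times> 'v) set \<Rightarrow> 'v list \<Rightarrow> bool" where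
  "is_hist E h \<longleftrightarrow> h \<noteq> [] \<and> (\<forall>k. Suc k < length h \<longrightarrow> (h ! k, h ! Suc k) \<in> E)"

definition lam_consistent ::
  "('v \<Rightarrow> 'p) \<Rightarrow> ('p \<Rightarrow> (nat \<Rightarrow> 'v) \<Rightarrow> real) \<Rightarrow> ('v \<Rightarrow> ereal) \<Rightarrow> (nat \<Rightarrow> 'v) \<Rightarrow> bool" where
  "lam_consistent own mu lam \<rho> \<longleftrightarrow>
     (\<forall>n. ereal (mu (own (\<rho> n)) (suffix n \<rho>)) \<ge> lam (\<rho> n))"

definition valid_strat :: "('v \<times> 'v) set \<Rightarrow> ('v \<Rightarrow> 'p) \<Rightarrow> 'p \<Rightarrow> ('v list \<Rightarrow> 'v) \<Rightarrow> bool" where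
  "valid_strat E own j \<sigma> \<longleftrightarrow> (\<forall>h. h \<noteq> [] \<and> own (last h) = j \<longrightarrow> (last h, \<sigma> h) \<in> E)"

fun hist_ext :: "('a list \<Rightarrow> 'a) \<Rightarrow> 'a list \<Rightarrow> nat \<Rightarrow> 'a list" where
  "hist_ext f h 0 = h"
| "hist_ext f h (Suc n) = hist_ext f h n @ [f (hist_ext f h n)]"

definition play_from :: "('a list \<Rightarrow> 'a) \<Rightarrow> 'a list \<Rightarrow> nat \<Rightarrow> 'a" where
  "play_from f h n = hist_ext f h (Suc n) ! n"

(* the play extending history h when all players follow profile \<sigma>;
   <\<sigma>>_v = outcome own \<sigma> [v];  <\<sigma>_{|hw}>_w = suffix (length (hw) - 1) (outcome own \<sigma> hw) *)
definition outcome :: "('v \<Rightarrow> 'p) \<Rightarrow> ('p \<Rightarrow> 'v list \<Rightarrow> 'v) \<Rightarrow> 'v list \<Rightarrow> nat \<Rightarrow> 'v" where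
  "outcome own \<sigma> h = play_from (\<lambda>h'. \<sigma> (own (last h')) h') h"

definition compatible :: "('v \<Rightarrow> 'p) \<Rightarrow> 'p \<Rightarrow> ('p \<Rightarrow> 'v list \<Rightarrow> 'v) \<Rightarrow> 'v \<Rightarrow> 'v list \<Rightarrow> bool" where
  "compatible own i \<sigma> v hw \<longleftrightarrow> hd hw = v \<and>
     (\<forall>k. Suc k < length hw \<and> own (hw ! k) \<noteq> i \<longrightarrow> hw ! Suc k = \<sigma> (own (hw ! k)) (take (Suc k) hw))"

(* \<lambda>Rat_i(v): profiles \<sigma>_{-i} (represented as full profiles whose i-th
   component is ignored) *)
definition lamRat ::
  "('v \<times> 'v) set \<Rightarrow> ('v \<Rightarrow> 'p) \<Rightarrow> ('p \<Rightarrow> (nat \<Rightarrow> 'v) \<Rightarrow> real) \<Rightarrow> ('v \<Rightarrow> ereal) \<Rightarrow> 'p \<Rightarrow> 'v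
    \<Rightarrow> ('p \<Rightarrow> 'v list \<Rightarrow> 'v) set" where
  "lamRat E own mu lam i v = {\<sigma>. (\<forall>j. j \<noteq> i \<longrightarrow> valid_strat E own j (\<sigma> j)) \<and>
     (\<exists>\<sigma>i. valid_strat E own i \<sigma>i \<and>
        (\<forall>hw. is_hist E hw \<and> compatible own i \<sigma> v hw \<longrightarrow>
           lam_consistent own mu lam (suffix (length hw - 1) (outcome own (\<sigma>(i := \<sigma>i)) hw))))}"

datatype 'v astate = PSt "'v list" | CSt "nat \<Rightarrow> 'v" | ATop | ABot

definition is_chal :: "'v astate \<Rightarrow> bool" where
  "is_chal s = (case s of CSt _ \<Rightarrow> True | _ \<Rightarrow> False)"

definition abs_trans ::
  "('v \<times> 'v) set \<Rightarrow> ('v \<Rightarrow> 'p) \<Rightarrow> ('p \<Rightarrow> (nat \<Rightarrow> 'v) \<Rightarrow> real) \<Rightarrow> ('v \<Rightarrow> ereal) \<Rightarrow> 'p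
    \<Rightarrow> 'v astate \<Rightarrow> 'v astate \<Rightarrow> bool" where
  "abs_trans E own mu lam i s t = (case s of
      PSt hv \<Rightarrow> t = ABot \<or> (\<exists>\<rho>. t = CSt \<rho> \<and> hv \<noteq> [] \<and> \<rho> 0 = last hv \<and> is_play E \<rho>
                                \<and> lam_consistent own mu lam \<rho>)
    | CSt \<rho> \<Rightarrow> t = ATop \<or> (\<exists>n v. own (\<rho> n) = i \<and> (\<rho> n, v) \<in> E \<and> v \<noteq> \<rho> (Suc n)
                                \<and> t = PSt (prefix (Suc n) \<rho> @ [v]))
    | ATop \<Rightarrow> t = ATop
    | ABot \<Rightarrow> t = ABot)"

definition valid_P ::
  "('v \<times> 'v) set \<Rightarrow> ('v \<Rightarrow> 'p) \<Rightarrow> ('p \<Rightarrow> (nat \<Rightarrow> 'v) \<Rightarrow> real) \<Rightarrow> ('v \<Rightarrow> ereal) \<Rightarrow> 'p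
    \<Rightarrow> ('v astate list \<Rightarrow> 'v astate) \<Rightarrow> bool" where
  "valid_P E own mu lam i \<tau> \<longleftrightarrow>
     (\<forall>h. h \<noteq> [] \<and> \<not> is_chal (last h) \<longrightarrow> abs_trans E own mu lam i (last h) (\<tau> h))"

definition valid_C ::
  "('v \<times> 'v) set \<Rightarrow> ('v \<Rightarrow> 'p) \<Rightarrow> ('p \<Rightarrow> (nat \<Rightarrow> 'v) \<Rightarrow> real) \<Rightarrow> ('v \<Rightarrow> ereal) \<Rightarrow> 'p
    \<Rightarrow> ('v astate list \<Rightarrow> 'v astate) \<Rightarrow> bool" where
  "valid_C E own mu lam i \<tau> \<longleftrightarrow>
     (\<forall>h. h \<noteq> [] \<and> is_chal (last h) \<longrightarrow> abs_trans E own mu lam i (last h) (\<tau> h))"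

definition abs_play ::
  "('v astate list \<Rightarrow> 'v astate) \<Rightarrow> ('v astate list \<Rightarrow> 'v astate) \<Rightarrow> 'v astate \<Rightarrow> nat \<Rightarrow> 'v astate" where
  "abs_play \<tau>P \<tau>C s0 = play_from (\<lambda>h. if is_chal (last h) then \<tau>C h else \<tau>P h) [s0]"

(* the part h^(k) contributed by the Prover state [h^(k) v_k] at position j *)
definition devpart :: "(nat \<Rightarrow> 'v astate) \<Rightarrow> nat \<Rightarrow> 'v list" where
  "devpart \<pi> j = (case \<pi> j of PSt hv \<Rightarrow> butlast hv | _ \<Rightarrow> [])"

definition iconcat :: "(nat \<Rightarrow> 'a list) \<Rightarrow> nat \<Rightarrow> 'a" where
  "iconcat L n = concat (map L [0..<(LEAST m. n < length (concat (map L [0..<m])))]) ! n"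

definition nu_C :: "('p \<Rightarrow> (nat \<Rightarrow> 'v) \<Rightarrow> real) \<Rightarrow> 'p \<Rightarrow> (nat \<Rightarrow> 'v astate) \<Rightarrow> ereal" where
  "nu_C mu i \<pi> =
     (if \<exists>n. \<pi> n = ABot then \<infinity>
      else if \<exists>n. \<pi> n = ATop then
        (let k = (LEAST n. \<pi> n = ATop) in
          (case \<pi> (k - 1) of
             CSt \<rho> \<Rightarrow> ereal (mu i (concat (map (devpart \<pi>) [0..<k]) \<frown> \<rho>))
           | _ \<Rightarrow> 0))
      else ereal (mu i (iconcat (devpart \<pi>))))"

end

theory Submission
  imports Defs
begin

(* Each side simulates the other.  Given a rational profile sigma_{-i} with witness sigma_i, Prover
   answers every state [h v] by the outcome of the profile after the history h^(1)...h^(k) v of G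
   reached so far; along any play of the abstract game these histories stay compatible with
   sigma_{-i}, so Challenger only collects payoffs of plays compatible with sigma_{-i}.  Conversely,
   given a Prover strategy that never reaches the state bot, let every player move along the proposal
   that is current when Prover's answers are replayed against the history.  This profile is
   lambda-rational, since after any history the play eventually follows one proposal forever; and
   for every play P compatible with it, the Challenger who makes i deviate exactly where P leaves
   the current proposal obtains the payoff mu_i(P). *)

lemma length_hist_ext [simp]: "length (hist_ext f h n) = length h + n"
  by (induct n) auto

lemma take_hist_ext: "m \<le> n \<Longrightarrow> take (length h + m) (hist_ext f h n) = hist_ext f h m"
  by (induct n) (auto simp: le_Suc_eq)

lemma nth_hist_ext: "j < length h + m \<Longrightarrow> m \<le> n \<Longrightarrow> hist_ext f h n ! j = hist_ext f h m ! j"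
  by (metis take_hist_ext nth_take)

lemma play_from_eq_nth_hist_ext: "j < length h + n \<Longrightarrow> play_from f h j = hist_ext f h n ! j"
  unfolding play_from_def by (metis add_Suc_right less_Suc_eq nat_le_linear nth_hist_ext trans_less_add2)

lemma prefix_play_from: "prefix (length h + n) (play_from f h) = hist_ext f h n"
  by (rule nth_equalityI) (auto simp: play_from_eq_nth_hist_ext)

lemma play_from_init: "j < length h \<Longrightarrow> play_from f h j = h ! j"
  using play_from_eq_nth_hist_ext[of j h 0 f] by simp

lemma play_from_step: "length h \<le> j \<Longrightarrow> play_from f h j = f (prefix j (play_from f h))"
proof -
  assume "length h \<le> j"
  then obtain n where n: "j = length h + n" by (metis le_add_diff_inverse)
  have "play_from f h j = hist_ext f h (Suc n) ! j" using n by (intro play_from_eq_nth_hist_ext) simp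
  also have "\<dots> = f (hist_ext f h n)" using n by (simp add: nth_append)
  finally show ?thesis using n prefix_play_from by metis
qed

lemma abs_play_0: "abs_play \<tau>P \<tau>C s0 0 = s0"
  unfolding abs_play_def by (simp add: play_from_init)

lemma abs_play_Suc: "abs_play \<tau>P \<tau>C s0 (Suc j) =
   (if is_chal (abs_play \<tau>P \<tau>C s0 j) then \<tau>C else \<tau>P) (prefix (Suc j) (abs_play \<tau>P \<tau>C s0))"
  unfolding abs_play_def by (subst play_from_step) simp_all

lemma outcome_init: "j < length h \<Longrightarrow> outcome own \<sigma> h j = h ! j"
  unfolding outcome_def by (simp add: play_from_init)

lemma outcome_step: "length h \<le> Suc j \<Longrightarrow>
   outcome own \<sigma> h (Suc j) = \<sigma> (own (outcome own \<sigma> h j)) (prefix (Suc j) (outcome own \<sigma> h))"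
  unfolding outcome_def by (subst play_from_step) simp_all

lemma prefix_outcome: "prefix (length h) (outcome own \<sigma> h) = h"
  by (rule nth_equalityI) (auto simp: outcome_init)

lemma is_play_suffix: "is_play E \<rho> \<Longrightarrow> is_play E (suffix k \<rho>)"
  unfolding is_play_def by simp

lemma lam_consistent_suffix: "lam_consistent own mu lam \<rho> \<Longrightarrow> lam_consistent own mu lam (suffix k \<rho>)"
  unfolding lam_consistent_def by (simp add: add.commute)

section \<open>Deviation prefixes\<close>

definition dev_part :: "'v astate \<Rightarrow> 'v list" where
  "dev_part s = (case s of PSt hv \<Rightarrow> butlast hv | _ \<Rightarrow> [])"

text \<open>For an abstract history \<open>A\<close> this is the concatenation \<open>h^(1) \<dots> h^(k)\<close> of the
  deviation prefixes of its Prover states.\<close>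

definition dev_hist :: "'v astate list \<Rightarrow> 'v list" where
  "dev_hist A = concat (map dev_part A)"

lemma dev_hist_Nil [simp]: "dev_hist [] = []"
  and dev_hist_Cons [simp]: "dev_hist (s # A) = dev_part s @ dev_hist A"
  and dev_hist_append [simp]: "dev_hist (A @ B) = dev_hist A @ dev_hist B"
  unfolding dev_hist_def by simp_all

lemma dev_part_simps [simp]:
  "dev_part (PSt hv) = butlast hv" "dev_part (CSt \<rho>) = []" "dev_part ATop = []" "dev_part ABot = []"
  unfolding dev_part_def by simp_all

lemma concat_devpart: "concat (map (devpart \<pi>) [0..<n]) = dev_hist (prefix n \<pi>)"
  unfolding dev_hist_def devpart_def dev_part_def subsequence_def by (simp add: comp_def)

lemma dev_hist_prefix_mono:
  "n \<le> m \<Longrightarrow> dev_hist (prefix m \<pi>) = dev_hist (prefix n \<pi>) @ dev_hist (\<pi> [n \<rightarrow> m])"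
  by (metis dev_hist_append le_add_diff_inverse subsequence_append)

lemma length_dev_hist_prefix_mono:
  "n \<le> m \<Longrightarrow> length (dev_hist (prefix n \<pi>)) \<le> length (dev_hist (prefix m \<pi>))"
  by (simp add: dev_hist_prefix_mono)

lemma nth_dev_hist_prefix_mono:
  "n \<le> m \<Longrightarrow> j < length (dev_hist (prefix n \<pi>)) \<Longrightarrow>
     dev_hist (prefix m \<pi>) ! j = dev_hist (prefix n \<pi>) ! j"
  by (simp add: dev_hist_prefix_mono nth_append)

lemma iconcat_devpart_nth:
  assumes unb: "\<forall>N. \<exists>n. N < length (dev_hist (prefix n \<pi>))"
    and j: "j < length (dev_hist (prefix n \<pi>))"
  shows "iconcat (devpart \<pi>) j = dev_hist (prefix n \<pi>) ! j"
proof -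
  define k where "k = (LEAST m. j < length (dev_hist (prefix m \<pi>)))"
  have k: "j < length (dev_hist (prefix k \<pi>))" unfolding k_def using unb by (metis LeastI)
  have "iconcat (devpart \<pi>) j = dev_hist (prefix k \<pi>) ! j"
    unfolding iconcat_def k_def concat_devpart by simp
  then show ?thesis
    using k j by (metis nat_le_linear nth_dev_hist_prefix_mono)
qed

lemma prefix_iconcat_devpart:
  assumes unb: "\<forall>N. \<exists>n. N < length (dev_hist (prefix n \<pi>))"
    and m: "m \<le> length (dev_hist (prefix n \<pi>))"
  shows "prefix m (iconcat (devpart \<pi>)) = take m (dev_hist (prefix n \<pi>))"
  using m by (intro nth_equalityI) (auto simp: iconcat_devpart_nth[OF unb])

lemma prefix_Suc: "prefix (Suc n) w = prefix n w @ [w n]"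
  by simp

declare subseq_to_Suc [simp del]

section \<open>Runs of the abstract negotiation game\<close>

locale negotiation =
  fixes E :: "('v \<times> 'v) set" and own :: "'v \<Rightarrow> 'p" and mu :: "'p \<Rightarrow> (nat \<Rightarrow> 'v) \<Rightarrow> real"
    and lam :: "'v \<Rightarrow> ereal" and i :: 'p and v0 :: 'v
  assumes total: "\<forall>v. \<exists>w. (v, w) \<in> E"
begin

abbreviation "abs_step \<equiv> abs_trans E own mu lam i"

lemma abs_step_PSt: "abs_step (PSt hv) t \<Longrightarrow> t = ABot \<or> (\<exists>\<rho>. t = CSt \<rho> \<and> \<rho> 0 = last hv \<and> is_play E \<rho>
    \<and> lam_consistent own mu lam \<rho>)"
  unfolding abs_trans_def by auto

lemma abs_step_CSt: "abs_step (CSt \<rho>) t \<Longrightarrow> t = ATop \<or> (\<exists>n v. own (\<rho> n) = i \<and> (\<rho> n, v) \<in> E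
    \<and> v \<noteq> \<rho> (Suc n) \<and> t = PSt (prefix (Suc n) \<rho> @ [v]))"
  unfolding abs_trans_def by simp

lemma abs_step_ATop: "abs_step ATop t \<longleftrightarrow> t = ATop"
  unfolding abs_trans_def by simp

lemma abs_step_to_PSt: "abs_step s (PSt hv) \<Longrightarrow> \<exists>\<rho> d v. s = CSt \<rho> \<and> hv = prefix (Suc d) \<rho> @ [v]"
  unfolding abs_trans_def by (cases s) auto

lemma abs_step_to_ATop: "abs_step s ATop \<Longrightarrow> s = ATop \<or> (\<exists>\<rho>. s = CSt \<rho>)"
  unfolding abs_trans_def by (cases s) auto

lemma abs_play_step:
  assumes "valid_P E own mu lam i \<tau>P" "valid_C E own mu lam i \<tau>C"
  shows "abs_step (abs_play \<tau>P \<tau>C s0 n) (abs_play \<tau>P \<tau>C s0 (Suc n))"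
proof -
  let ?h = "prefix (Suc n) (abs_play \<tau>P \<tau>C s0)"
  have "?h \<noteq> []" by simp
  then have "abs_step (last ?h) ((if is_chal (last ?h) then \<tau>C else \<tau>P) ?h)"
    using assms unfolding valid_P_def valid_C_def by simp
  moreover have "last ?h = abs_play \<tau>P \<tau>C s0 n" by (simp add: prefix_Suc)
  ultimately show ?thesis by (simp only: abs_play_Suc)
qed

definition bot_free_run :: "(nat \<Rightarrow> 'v astate) \<Rightarrow> bool" where
  "bot_free_run \<pi> \<longleftrightarrow> \<pi> 0 = PSt [v0] \<and> (\<forall>n. abs_step (\<pi> n) (\<pi> (Suc n))) \<and> (\<forall>n. \<pi> n \<noteq> ABot)"

lemma ATop_absorbing:
  assumes "\<forall>n. abs_step (\<pi> n) (\<pi> (Suc n))" "\<pi> n = ATop" "n \<le> m"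
  shows "\<pi> m = ATop"
  using assms(3)
proof (induct m rule: dec_induct)
  case (step m)
  then show ?case using assms(1)[rule_format, of m] by (simp add: abs_step_ATop)
qed (use assms(2) in simp)

lemma nu_C_accepted:
  assumes run: "bot_free_run \<pi>" and ex: "\<exists>n. \<pi> n = ATop"
  obtains k \<rho> where "\<pi> k = CSt \<rho>" "\<And>n. \<pi> n = ATop \<longleftrightarrow> Suc k \<le> n"
    "nu_C mu i \<pi> = ereal (mu i (dev_hist (prefix k \<pi>) \<frown> \<rho>))"
proof -
  have tr: "\<forall>n. abs_step (\<pi> n) (\<pi> (Suc n))" and nb: "\<forall>n. \<pi> n \<noteq> ABot"
    using run unfolding bot_free_run_def by auto
  define k' where "k' = (LEAST n. \<pi> n = ATop)"
  have top: "\<pi> n = ATop \<longleftrightarrow> k' \<le> n" for n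
  proof
    assume "\<pi> n = ATop" then show "k' \<le> n" unfolding k'_def by (rule Least_le)
  next
    assume "k' \<le> n" then show "\<pi> n = ATop"
      using ATop_absorbing[OF tr] LeastI_ex[OF ex] unfolding k'_def by blast
  qed
  have "k' \<noteq> 0" using run top[of 0] unfolding bot_free_run_def by auto
  then obtain k where k: "k' = Suc k" by (cases k') auto
  have "\<pi> k \<noteq> ATop" "\<pi> (Suc k) = ATop" using top k by simp_all
  moreover have "abs_step (\<pi> k) (\<pi> (Suc k))" using tr by blast
  ultimately obtain \<rho> where \<rho>: "\<pi> k = CSt \<rho>" using abs_step_to_ATop by auto
  have "concat (map (devpart \<pi>) [0..<Suc k]) = dev_hist (prefix k \<pi>)"
    using \<rho> by (simp only: concat_devpart) (simp add: prefix_Suc)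
  moreover have "nu_C mu i \<pi> = (case \<pi> (k' - 1) of
      CSt \<rho> \<Rightarrow> ereal (mu i (concat (map (devpart \<pi>) [0..<k']) \<frown> \<rho>)) | _ \<Rightarrow> 0)"
    unfolding nu_C_def using nb ex by (simp add: k'_def[symmetric] Let_def)
  ultimately have nu: "nu_C mu i \<pi> = ereal (mu i (dev_hist (prefix k \<pi>) \<frown> \<rho>))"
    using k \<rho> by (simp del: upt_Suc)
  show ?thesis using top k by (intro that[OF \<rho> _ nu]) simp
qed

lemma nu_C_ABot: "\<pi> n = ABot \<Longrightarrow> nu_C mu i \<pi> = \<infinity>"
  unfolding nu_C_def by auto

lemma nu_C_infinite:
  assumes "bot_free_run \<pi>" "\<forall>n. \<pi> n \<noteq> ATop"
  shows "nu_C mu i \<pi> = ereal (mu i (iconcat (devpart \<pi>)))"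
  using assms unfolding nu_C_def bot_free_run_def by auto

text \<open>Unless Challenger accepts, a Prover state with a nonempty deviation prefix comes every
  second or third step.\<close>

lemma dev_hist_grows:
  assumes run: "bot_free_run \<pi>" and nt: "\<forall>n. \<pi> n \<noteq> ATop"
  shows "length (dev_hist (prefix n \<pi>)) < length (dev_hist (prefix (n + 3) \<pi>))"
proof -
  have tr: "\<forall>n. abs_step (\<pi> n) (\<pi> (Suc n))" and nb: "\<forall>n. \<pi> n \<noteq> ABot"
    using run unfolding bot_free_run_def by auto
  have "\<exists>m hv. n \<le> m \<and> m \<le> n + 1 \<and> \<pi> (Suc m) = PSt hv"
  proof (cases "\<pi> (Suc n)")
    case (PSt hv)
    then show ?thesis by (intro exI[of _ n]) simp
  next
    case (CSt \<rho>)
    then have "abs_step (CSt \<rho>) (\<pi> (Suc (Suc n)))" using tr by metis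
    then obtain hv where "\<pi> (Suc (Suc n)) = PSt hv" using abs_step_CSt nt by blast
    then show ?thesis by (intro exI[of _ "Suc n"]) simp
  qed (use nt nb in blast)+
  then obtain m hv where m: "n \<le> m" "m \<le> n + 1" "\<pi> (Suc m) = PSt hv" by blast
  moreover obtain \<rho> d v where "hv = prefix (Suc d) \<rho> @ [v]"
    using abs_step_to_PSt tr m(3) by metis
  ultimately have "dev_part (\<pi> (Suc m)) \<noteq> []" by simp
  then have "length (dev_hist (prefix (Suc m) \<pi>)) < length (dev_hist (prefix (Suc (Suc m)) \<pi>))"
    by (simp add: prefix_Suc[where n="Suc m"])
  moreover have "length (dev_hist (prefix n \<pi>)) \<le> length (dev_hist (prefix (Suc m) \<pi>))"
    using m by (intro length_dev_hist_prefix_mono) simp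
  moreover have "length (dev_hist (prefix (Suc (Suc m)) \<pi>)) \<le> length (dev_hist (prefix (n + 3) \<pi>))"
    using m by (intro length_dev_hist_prefix_mono) simp
  ultimately show ?thesis by simp
qed

lemma dev_hist_unbounded:
  assumes "bot_free_run \<pi>" "\<forall>n. \<pi> n \<noteq> ATop"
  shows "\<forall>N. \<exists>n. N < length (dev_hist (prefix n \<pi>))"
proof -
  have "N \<le> length (dev_hist (prefix (3 * N) \<pi>))" for N
  proof (induct N)
    case (Suc N)
    then show ?case using dev_hist_grows[OF assms, of "3 * N"] by (simp add: add.commute)
  qed simp
  then show ?thesis by (metis Suc_le_lessD)
qed

definition valid_profile :: "('p \<Rightarrow> 'v list \<Rightarrow> 'v) \<Rightarrow> bool" where
  "valid_profile \<sigma> \<longleftrightarrow> (\<forall>j. valid_strat E own j (\<sigma> j))"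

definition compatible_play :: "('p \<Rightarrow> 'v list \<Rightarrow> 'v) \<Rightarrow> (nat \<Rightarrow> 'v) \<Rightarrow> bool" where
  "compatible_play \<sigma> P \<longleftrightarrow>
     P 0 = v0 \<and> (\<forall>m. own (P m) \<noteq> i \<longrightarrow> P (Suc m) = \<sigma> (own (P m)) (prefix (Suc m) P))"

lemma is_hist_prefix: "is_play E P \<Longrightarrow> 0 < m \<Longrightarrow> is_hist E (prefix m P)"
  unfolding is_hist_def is_play_def by auto

lemma compatible_prefix: "compatible_play \<sigma> P \<Longrightarrow> 0 < m \<Longrightarrow> compatible own i \<sigma> v0 (prefix m P)"
  unfolding compatible_def compatible_play_def by (auto simp: min_def hd_conv_nth)

lemma is_play_if_prefixes:
  assumes "\<And>m. 0 < m \<Longrightarrow> is_hist E (prefix m P)"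
  shows "is_play E P"
  unfolding is_play_def
proof
  fix n
  have "(prefix (Suc (Suc n)) P ! n, prefix (Suc (Suc n)) P ! Suc n) \<in> E"
    using assms[of "Suc (Suc n)"] unfolding is_hist_def by simp
  then show "(P n, P (Suc n)) \<in> E" by simp
qed

lemma compatible_play_if_prefixes:
  assumes "\<And>m. 0 < m \<Longrightarrow> compatible own i \<sigma> v0 (prefix m P)"
  shows "compatible_play \<sigma> P"
  unfolding compatible_play_def
proof (intro conjI allI impI)
  show "P 0 = v0" using assms[of 1] unfolding compatible_def by (simp add: prefix_Suc)
  fix m assume "own (P m) \<noteq> i"
  then show "P (Suc m) = \<sigma> (own (P m)) (prefix (Suc m) P)"
    using assms[of "Suc (Suc m)"] unfolding compatible_def by (auto simp: min_def)
qed

lemma nth_snoc_cases: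
  assumes "Suc k < length (h @ [v])" "h \<noteq> []"
  shows "(Suc k < length h \<and> (h @ [v]) ! k = h ! k \<and> (h @ [v]) ! Suc k = h ! Suc k
            \<and> take (Suc k) (h @ [v]) = take (Suc k) h)
       \<or> ((h @ [v]) ! k = last h \<and> (h @ [v]) ! Suc k = v \<and> take (Suc k) (h @ [v]) = h)"
proof (cases "Suc k < length h")
  case False
  then have "Suc k = length h" "k = length h - 1" using assms by simp_all
  then show ?thesis using assms by (simp add: nth_append last_conv_nth)
qed (simp add: nth_append)

lemma is_hist_snoc:
  assumes "is_hist E h" "(last h, v) \<in> E"
  shows "is_hist E (h @ [v])"
  unfolding is_hist_def
proof (intro conjI allI impI)
  fix k assume k: "Suc k < length (h @ [v])"
  have "h \<noteq> []" using assms unfolding is_hist_def by simp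
  then show "((h @ [v]) ! k, (h @ [v]) ! Suc k) \<in> E"
    using nth_snoc_cases[OF k] assms unfolding is_hist_def by auto
qed simp

lemma compatible_snoc:
  assumes "compatible own i \<sigma> v0 h" "h \<noteq> []" "own (last h) = i"
  shows "compatible own i \<sigma> v0 (h @ [v])"
  unfolding compatible_def
proof (intro conjI allI impI)
  show "hd (h @ [v]) = v0" using assms unfolding compatible_def by simp
  fix k assume k: "Suc k < length (h @ [v]) \<and> own ((h @ [v]) ! k) \<noteq> i"
  then show "(h @ [v]) ! Suc k = \<sigma> (own ((h @ [v]) ! k)) (take (Suc k) (h @ [v]))"
    using nth_snoc_cases[OF conjunct1[OF k] assms(2)] assms unfolding compatible_def by auto
qed

lemma is_hist_take: "is_hist E h \<Longrightarrow> 0 < m \<Longrightarrow> is_hist E (take m h)"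
  unfolding is_hist_def by auto

lemma compatible_take:
  "compatible own i \<sigma> v0 h \<Longrightarrow> 0 < m \<Longrightarrow> h \<noteq> [] \<Longrightarrow> compatible own i \<sigma> v0 (take m h)"
  unfolding compatible_def by (auto simp: min_def take_take)

lemma is_play_outcome: "valid_profile \<sigma> \<Longrightarrow> is_hist E h \<Longrightarrow> is_play E (outcome own \<sigma> h)"
  unfolding is_play_def
proof
  fix n assume valid: "valid_profile \<sigma>" and h: "is_hist E h"
  show "(outcome own \<sigma> h n, outcome own \<sigma> h (Suc n)) \<in> E"
  proof (cases "Suc n < length h")
    case True then show ?thesis using h unfolding is_hist_def by (simp add: outcome_init)
  next
    case False
    then have "outcome own \<sigma> h (Suc n) = \<sigma> (own (outcome own \<sigma> h n)) (prefix (Suc n) (outcome own \<sigma> h))"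
      by (intro outcome_step) simp
    moreover have "prefix (Suc n) (outcome own \<sigma> h) \<noteq> []"
      "last (prefix (Suc n) (outcome own \<sigma> h)) = outcome own \<sigma> h n"
      by (simp_all add: prefix_Suc)
    ultimately show ?thesis using valid unfolding valid_profile_def valid_strat_def by metis
  qed
qed

lemma compatible_play_outcome:
  assumes "valid_profile \<sigma>'" and agree: "\<forall>j. j \<noteq> i \<longrightarrow> \<sigma>' j = \<sigma> j"
    and h: "is_hist E h" and c: "compatible own i \<sigma> v0 h"
  shows "compatible_play \<sigma> (outcome own \<sigma>' h)"
  unfolding compatible_play_def
proof (intro conjI allI impI)
  let ?P = "outcome own \<sigma>' h"
  have ne: "h \<noteq> []" using h unfolding is_hist_def by simp
  show "?P 0 = v0" using ne c unfolding compatible_def by (simp add: outcome_init hd_conv_nth)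
  fix m assume o: "own (?P m) \<noteq> i"
  show "?P (Suc m) = \<sigma> (own (?P m)) (prefix (Suc m) ?P)"
  proof (cases "Suc m < length h")
    case True
    have "take (Suc m) h = prefix (Suc m) ?P"
      using prefix_outcome[where h=h and own=own and \<sigma>=\<sigma>'] True
      by (metis subsequence_take min_def less_imp_le_nat add_0)
    then show ?thesis using True c o unfolding compatible_def by (simp add: outcome_init)
  next
    case False
    then have "?P (Suc m) = \<sigma>' (own (?P m)) (prefix (Suc m) ?P)" by (intro outcome_step) simp
    then show ?thesis using agree o by simp
  qed
qed

definition follow_play :: "(nat \<Rightarrow> 'v) \<Rightarrow> 'v list \<Rightarrow> 'v" where
  "follow_play P h = (if h \<noteq> [] \<and> h = prefix (length h) P then P (length h) else SOME w. (last h, w) \<in> E)"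

lemma valid_strat_follow_play:
  assumes play: "is_play E P"
  shows "valid_strat E own j (follow_play P)"
  unfolding valid_strat_def
proof (intro allI impI)
  fix h :: "'v list" assume h: "h \<noteq> [] \<and> own (last h) = j"
  show "(last h, follow_play P h) \<in> E"
  proof (cases "h = prefix (length h) P")
    case True
    obtain n where n: "length h = Suc n" using h by (cases h) auto
    have pre: "prefix (Suc n) P = h" by (subst n[symmetric]) (rule True[symmetric])
    then have "last h = P n" by (metis prefix_Suc last_snoc)
    moreover have "follow_play P h = P (Suc n)" using h n by (simp add: follow_play_def pre)
    ultimately show ?thesis using play unfolding is_play_def by simp
  next
    case False
    then have "follow_play P h = (SOME w. (last h, w) \<in> E)" unfolding follow_play_def by simp
    then show ?thesis using total someI_ex by metis
  qed
qed

lemma outcome_follow_play: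
  assumes compat: "compatible_play \<sigma> P"
  shows "outcome own (\<sigma>(i := follow_play P)) [v0] = P"
proof
  fix k
  define \<tau> where "\<tau> = \<sigma>(i := follow_play P)"
  show "outcome own (\<sigma>(i := follow_play P)) [v0] k = P k"
    unfolding \<tau>_def[symmetric]
  proof (induct k rule: less_induct)
    case (less k)
    show ?case
    proof (cases k)
      case 0
      then show ?thesis using compat unfolding compatible_play_def by (simp add: outcome_init)
    next
      case (Suc n)
      have "prefix (Suc n) (outcome own \<tau> [v0]) = prefix (Suc n) P"
        using less Suc by (simp add: subsequence_def)
      moreover have "outcome own \<tau> [v0] n = P n" using less Suc by simp
      ultimately have "outcome own \<tau> [v0] k = \<tau> (own (P n)) (prefix (Suc n) P)"
        using Suc by (simp add: outcome_step)
      also have "\<dots> = P k"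
        using Suc compat unfolding compatible_play_def \<tau>_def
        by (cases "own (P n) = i") (simp_all add: follow_play_def)
      finally show ?thesis .
    qed
  qed
qed

lemma compatible_play_le_SUP:
  assumes "compatible_play \<sigma> P" "is_play E P"
  shows "ereal (mu i P) \<le> (SUP \<sigma>i \<in> {\<sigma>i. valid_strat E own i \<sigma>i}. ereal (mu i (outcome own (\<sigma>(i := \<sigma>i)) [v0])))"
proof -
  have "follow_play P \<in> {\<sigma>i. valid_strat E own i \<sigma>i}" using valid_strat_follow_play[OF assms(2)] by simp
  then show ?thesis using outcome_follow_play[OF assms(1)] by (metis (mono_tags, lifting) SUP_upper)
qed

section \<open>Prover following a rational profile\<close>

context
  fixes \<sigma> :: "'p \<Rightarrow> 'v list \<Rightarrow> 'v" and \<sigma>i :: "'v list \<Rightarrow> 'v"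
  assumes profile: "valid_profile (\<sigma>(i := \<sigma>i))"
    and consistent: "\<And>h. is_hist E h \<Longrightarrow> compatible own i \<sigma> v0 h \<Longrightarrow>
      lam_consistent own mu lam (suffix (length h - 1) (outcome own (\<sigma>(i := \<sigma>i)) h))"
begin

definition proposal :: "'v list \<Rightarrow> nat \<Rightarrow> 'v" where
  "proposal h = suffix (length h - 1) (outcome own (\<sigma>(i := \<sigma>i)) h)"

text \<open>In the state \<open>[h v]\<close> reached along the abstract history \<open>A\<close>, the history of \<open>G\<close> played so far
  is \<open>dev_hist (butlast A) @ h v\<close>; Prover proposes its continuation under the profile.\<close>

definition prover_follow :: "'v astate list \<Rightarrow> 'v astate" where
  "prover_follow A = (case last A of
      PSt hv \<Rightarrow> (if hv \<noteq> [] \<and> is_hist E (dev_hist (butlast A) @ hv)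
                     \<and> compatible own i \<sigma> v0 (dev_hist (butlast A) @ hv)
                 then CSt (proposal (dev_hist (butlast A) @ hv)) else ABot)
    | ATop \<Rightarrow> ATop | _ \<Rightarrow> ABot)"

lemma proposal_admissible:
  assumes "is_hist E h" "compatible own i \<sigma> v0 h"
  shows "proposal h 0 = last h" "is_play E (proposal h)" "lam_consistent own mu lam (proposal h)"
proof -
  have "h \<noteq> []" using assms unfolding is_hist_def by simp
  then show "proposal h 0 = last h" unfolding proposal_def by (simp add: outcome_init last_conv_nth)
  show "is_play E (proposal h)"
    unfolding proposal_def using is_play_outcome[OF profile assms(1)] by (rule is_play_suffix)
  show "lam_consistent own mu lam (proposal h)"
    unfolding proposal_def using consistent[OF assms] .
qed

lemma outcome_from_compatible:
  assumes "is_hist E h" "compatible own i \<sigma> v0 h"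
  shows "is_play E (outcome own (\<sigma>(i := \<sigma>i)) h)" "compatible_play \<sigma> (outcome own (\<sigma>(i := \<sigma>i)) h)"
  using is_play_outcome[OF profile assms(1)] compatible_play_outcome[OF profile _ assms] by simp_all

lemma valid_P_prover_follow: "valid_P E own mu lam i prover_follow"
  unfolding valid_P_def
proof (intro allI impI)
  fix A :: "'v astate list" assume A: "A \<noteq> [] \<and> \<not> is_chal (last A)"
  show "abs_step (last A) (prover_follow A)"
  proof (cases "last A")
    case (PSt hv)
    let ?h = "dev_hist (butlast A) @ hv"
    show ?thesis
    proof (cases "hv \<noteq> [] \<and> is_hist E ?h \<and> compatible own i \<sigma> v0 ?h")
      case True
      then have "prover_follow A = CSt (proposal ?h)" "last ?h = last hv"
        unfolding prover_follow_def using PSt by simp_all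
      then show ?thesis using PSt True proposal_admissible[of ?h] unfolding abs_trans_def by auto
    next
      case False
      then show ?thesis unfolding prover_follow_def abs_trans_def using PSt by auto
    qed
  qed (use A in \<open>auto simp: is_chal_def prover_follow_def abs_trans_def\<close>)
qed

context
  fixes \<tau>C :: "'v astate list \<Rightarrow> 'v astate"
  assumes valid_C: "valid_C E own mu lam i \<tau>C"
begin

abbreviation follow_run :: "nat \<Rightarrow> 'v astate" where
  "follow_run \<equiv> abs_play prover_follow \<tau>C (PSt [v0])"

definition follow_inv :: "nat \<Rightarrow> bool" where
  "follow_inv n = (case follow_run n of
      PSt hv \<Rightarrow> hv \<noteq> [] \<and> is_hist E (dev_hist (prefix n follow_run) @ hv)
                 \<and> compatible own i \<sigma> v0 (dev_hist (prefix n follow_run) @ hv)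
    | CSt \<rho> \<Rightarrow> (\<exists>h. is_hist E h \<and> compatible own i \<sigma> v0 h
                 \<and> length h = Suc (length (dev_hist (prefix n follow_run)))
                 \<and> dev_hist (prefix n follow_run) \<frown> \<rho> = outcome own (\<sigma>(i := \<sigma>i)) h)
    | ATop \<Rightarrow> True | ABot \<Rightarrow> False)"

lemma follow_run_step: "abs_step (follow_run n) (follow_run (Suc n))"
  using abs_play_step[OF valid_P_prover_follow valid_C] .

lemma follow_inv_PSt:
  assumes inv: "follow_inv n" and st: "follow_run n = PSt hv"
  shows "follow_inv (Suc n)"
proof -
  let ?d = "dev_hist (prefix n follow_run)"
  let ?h = "?d @ hv"
  let ?P = "outcome own (\<sigma>(i := \<sigma>i)) ?h"
  have I: "hv \<noteq> []" "is_hist E ?h" "compatible own i \<sigma> v0 ?h"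
    using inv st unfolding follow_inv_def by simp_all
  have "follow_run (Suc n) = prover_follow (prefix (Suc n) follow_run)"
    using st by (simp add: abs_play_Suc is_chal_def)
  then have next_st: "follow_run (Suc n) = CSt (proposal ?h)"
    using st I unfolding prover_follow_def by (simp add: prefix_Suc)
  have d: "dev_hist (prefix (Suc n) follow_run) = ?d @ butlast hv"
    using st by (simp add: prefix_Suc)
  then have len: "length ?h = Suc (length (dev_hist (prefix (Suc n) follow_run)))" using I by simp
  have "prefix (length ?h - 1) ?P = take (length ?h - 1) (prefix (length ?h) ?P)" by simp
  also have "\<dots> = butlast ?h" by (simp only: prefix_outcome butlast_conv_take)
  also have "\<dots> = dev_hist (prefix (Suc n) follow_run)" using d I by (simp add: butlast_append)
  finally have "dev_hist (prefix (Suc n) follow_run) \<frown> proposal ?h = ?P"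
    unfolding proposal_def by (metis prefix_suffix)
  then show ?thesis unfolding follow_inv_def next_st using I len by auto
qed

lemma follow_inv_CSt:
  assumes inv: "follow_inv n" and st: "follow_run n = CSt \<rho>"
  shows "follow_inv (Suc n)"
proof -
  let ?d = "dev_hist (prefix n follow_run)"
  obtain h where h: "is_hist E h" "compatible own i \<sigma> v0 h" "length h = Suc (length ?d)"
    "?d \<frown> \<rho> = outcome own (\<sigma>(i := \<sigma>i)) h"
    using inv st unfolding follow_inv_def by auto
  have "abs_step (CSt \<rho>) (follow_run (Suc n))" using follow_run_step[of n] st by simp
  then consider "follow_run (Suc n) = ATop"
    | d v where "own (\<rho> d) = i" "(\<rho> d, v) \<in> E" "follow_run (Suc n) = PSt (prefix (Suc d) \<rho> @ [v])"
    using abs_step_CSt by blast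
  then show ?thesis
  proof cases
    case 1
    then show ?thesis unfolding follow_inv_def by simp
  next
    case (2 d v)
    let ?P = "outcome own (\<sigma>(i := \<sigma>i)) h"
    let ?m = "length ?d + Suc d"
    have pre: "?d @ prefix (Suc d) \<rho> = prefix ?m ?P" using h(4)[symmetric] by simp
    have "is_hist E (prefix ?m ?P)" "compatible own i \<sigma> v0 (prefix ?m ?P)"
      using outcome_from_compatible[OF h(1,2)] is_hist_prefix compatible_prefix by simp_all
    moreover have "last (prefix ?m ?P) = \<rho> d" "prefix ?m ?P \<noteq> []"
      using h(4)[symmetric] by (simp_all add: prefix_Suc)
    ultimately have "is_hist E (prefix ?m ?P @ [v])" "compatible own i \<sigma> v0 (prefix ?m ?P @ [v])"
      using 2 is_hist_snoc compatible_snoc by simp_all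
    moreover have "dev_hist (prefix (Suc n) follow_run) = ?d" using st by (simp add: prefix_Suc)
    ultimately show ?thesis unfolding follow_inv_def 2(3) using pre[symmetric] by simp
  qed
qed

lemma follow_inv: "follow_inv n"
proof (induct n)
  case 0
  show ?case unfolding follow_inv_def is_hist_def compatible_def by (simp add: abs_play_0)
next
  case (Suc n)
  show ?case
  proof (cases "follow_run n")
    case (PSt hv)
    then show ?thesis using follow_inv_PSt[OF Suc] by blast
  next
    case (CSt \<rho>)
    then show ?thesis using follow_inv_CSt[OF Suc] by blast
  next
    case ATop
    then show ?thesis using follow_run_step[of n] unfolding follow_inv_def by (simp add: abs_step_ATop)
  next
    case ABot
    then show ?thesis using Suc unfolding follow_inv_def by simp
  qed
qed

lemma bot_free_follow_run: "bot_free_run follow_run"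
proof -
  have "follow_run n \<noteq> ABot" for n using follow_inv[of n] unfolding follow_inv_def by auto
  then show ?thesis unfolding bot_free_run_def using follow_run_step by (simp add: abs_play_0)
qed

lemma follow_run_infinite_compatible:
  assumes nt: "\<forall>n. follow_run n \<noteq> ATop"
  defines "P \<equiv> iconcat (devpart follow_run)"
  shows "is_play E P" "compatible_play \<sigma> P"
proof -
  have unb: "\<forall>N. \<exists>n. N < length (dev_hist (prefix n follow_run))"
    using dev_hist_unbounded[OF bot_free_follow_run nt] .
  have "is_hist E (prefix m P) \<and> compatible own i \<sigma> v0 (prefix m P)" if m: "0 < m" for m
  proof -
    obtain n where n: "m < length (dev_hist (prefix n follow_run))" using unb by blast
    have pm: "prefix m P = take m (dev_hist (prefix n follow_run))"
      unfolding P_def using prefix_iconcat_devpart[OF unb] n by simp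
    show ?thesis
    proof (cases "follow_run n")
      case (PSt hv)
      let ?h = "dev_hist (prefix n follow_run) @ hv"
      have "is_hist E ?h" "compatible own i \<sigma> v0 ?h"
        using PSt follow_inv[of n] unfolding follow_inv_def by auto
      moreover have "prefix m P = take m ?h" "?h \<noteq> []" using pm n by auto
      ultimately show ?thesis using is_hist_take[where h="?h"] compatible_take[where h="?h"] m by simp
    next
      case (CSt \<rho>)
      then obtain h where h: "is_hist E h" "compatible own i \<sigma> v0 h"
        "dev_hist (prefix n follow_run) \<frown> \<rho> = outcome own (\<sigma>(i := \<sigma>i)) h"
        using follow_inv[of n] unfolding follow_inv_def by auto
      have "prefix m P = prefix m (outcome own (\<sigma>(i := \<sigma>i)) h)" using pm h(3)[symmetric] n by simp
      then show ?thesis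
        using outcome_from_compatible[OF h(1,2)] is_hist_prefix compatible_prefix m by simp
    next
      case ATop
      then show ?thesis using nt by simp
    next
      case ABot
      then show ?thesis using bot_free_follow_run unfolding bot_free_run_def by simp
    qed
  qed
  then show "is_play E P" "compatible_play \<sigma> P"
    using is_play_if_prefixes compatible_play_if_prefixes by blast+
qed

lemma follow_run_value_le:
  "nu_C mu i follow_run \<le> (SUP \<sigma>i' \<in> {\<sigma>i'. valid_strat E own i \<sigma>i'}. ereal (mu i (outcome own (\<sigma>(i := \<sigma>i')) [v0])))"
proof (cases "\<exists>n. follow_run n = ATop")
  case True
  then obtain k \<rho> where k: "follow_run k = CSt \<rho>"
    "nu_C mu i follow_run = ereal (mu i (dev_hist (prefix k follow_run) \<frown> \<rho>))"
    using nu_C_accepted[OF bot_free_follow_run True] by blast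
  then obtain h where h: "is_hist E h" "compatible own i \<sigma> v0 h"
    "dev_hist (prefix k follow_run) \<frown> \<rho> = outcome own (\<sigma>(i := \<sigma>i)) h"
    using follow_inv[of k] unfolding follow_inv_def by auto
  show ?thesis
    using compatible_play_le_SUP[OF outcome_from_compatible(2,1)[OF h(1,2)]] k(2) h(3) by simp
next
  case False
  then show ?thesis
    using compatible_play_le_SUP[OF follow_run_infinite_compatible(2,1)] nu_C_infinite[OF bot_free_follow_run]
    by simp
qed

end

end

lemma prover_value_le:
  assumes "\<sigma> \<in> lamRat E own mu lam i v0"
  shows "(INF \<tau>P \<in> {\<tau>. valid_P E own mu lam i \<tau>}. SUP \<tau>C \<in> {\<tau>. valid_C E own mu lam i \<tau>}.
            nu_C mu i (abs_play \<tau>P \<tau>C (PSt [v0])))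
       \<le> (SUP \<sigma>i \<in> {\<sigma>i. valid_strat E own i \<sigma>i}. ereal (mu i (outcome own (\<sigma>(i := \<sigma>i)) [v0])))"
proof -
  obtain \<sigma>i where "valid_strat E own i \<sigma>i" and others: "\<forall>j. j \<noteq> i \<longrightarrow> valid_strat E own j (\<sigma> j)"
    and consistent: "\<And>h. is_hist E h \<Longrightarrow> compatible own i \<sigma> v0 h \<Longrightarrow>
      lam_consistent own mu lam (suffix (length h - 1) (outcome own (\<sigma>(i := \<sigma>i)) h))"
    using assms unfolding lamRat_def by blast
  then have profile: "valid_profile (\<sigma>(i := \<sigma>i))" unfolding valid_profile_def by simp
  show ?thesis
  proof (rule INF_lower2)
    show "prover_follow \<sigma> \<sigma>i \<in> {\<tau>. valid_P E own mu lam i \<tau>}"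
      using valid_P_prover_follow[OF profile consistent] by simp
  qed (use follow_run_value_le[OF profile consistent] in \<open>auto intro: SUP_least\<close>)
qed

end

section \<open>A profile following Prover's proposals\<close>

text \<open>\<open>simulate \<tau>P H\<close> is the abstract history in which Prover plays \<open>\<tau>P\<close> and Challenger accepts the
  current proposal as long as the play \<open>H\<close> of \<open>G\<close> agrees with it, and makes player \<open>i\<close> deviate to
  the vertex of \<open>H\<close> as soon as it does not.\<close>

definition sim_step ::
  "('v astate list \<Rightarrow> 'v astate) \<Rightarrow> 'v astate list \<Rightarrow> nat \<Rightarrow> 'v \<Rightarrow> 'v astate list" where
  "sim_step \<tau>P A m w = (case last A of
      CSt \<rho> \<Rightarrow> (let d = m - length (dev_hist A) in
                 if w = \<rho> d then A
                 else A @ [PSt (prefix d \<rho> @ [w])] @ [\<tau>P (A @ [PSt (prefix d \<rho> @ [w])])])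
    | _ \<Rightarrow> A)"

primrec simulate_rev :: "('v astate list \<Rightarrow> 'v astate) \<Rightarrow> 'v list \<Rightarrow> 'v astate list" where
  "simulate_rev \<tau>P [] = []"
| "simulate_rev \<tau>P (w # ws) = (if ws = [] then [PSt [w], \<tau>P [PSt [w]]]
     else sim_step \<tau>P (simulate_rev \<tau>P ws) (length ws) w)"

definition simulate :: "('v astate list \<Rightarrow> 'v astate) \<Rightarrow> 'v list \<Rightarrow> 'v astate list" where
  "simulate \<tau>P H = simulate_rev \<tau>P (rev H)"

lemma simulate_single: "simulate \<tau>P [w] = [PSt [w], \<tau>P [PSt [w]]]"
  unfolding simulate_def by simp

lemma simulate_snoc: "H \<noteq> [] \<Longrightarrow> simulate \<tau>P (H @ [w]) = sim_step \<tau>P (simulate \<tau>P H) (length H) w"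
  unfolding simulate_def by simp

context negotiation
begin

definition follow_simulation :: "('v astate list \<Rightarrow> 'v astate) \<Rightarrow> 'v list \<Rightarrow> 'v" where
  "follow_simulation \<tau>P H = (case last (simulate \<tau>P H) of
      CSt \<rho> \<Rightarrow> (let w = \<rho> (length H - length (dev_hist (simulate \<tau>P H))) in
                 if (last H, w) \<in> E then w else SOME w. (last H, w) \<in> E)
    | _ \<Rightarrow> SOME w. (last H, w) \<in> E)"

lemma valid_strat_follow_simulation: "valid_strat E own j (follow_simulation \<tau>P)"
  unfolding valid_strat_def follow_simulation_def using total someI_ex[of "\<lambda>w. (_, w) \<in> E"]
  by (auto simp: Let_def split: astate.split)

definition track_challenger :: "(nat \<Rightarrow> 'v) \<Rightarrow> 'v astate list \<Rightarrow> 'v astate" where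
  "track_challenger P A = (case last A of
      CSt \<rho> \<Rightarrow> (let b = length (dev_hist A) in
                 if \<exists>n. \<rho> n \<noteq> P (b + n) then
                   (let d = LEAST n. \<rho> n \<noteq> P (b + n) in
                     if 0 < d \<and> own (\<rho> (d - 1)) = i \<and> (\<rho> (d - 1), P (b + d)) \<in> E
                     then PSt (prefix d \<rho> @ [P (b + d)]) else ATop)
                 else ATop)
    | _ \<Rightarrow> ATop)"

lemma track_challenger_deviation:
  assumes "last A = CSt \<rho>" and "\<rho> d \<noteq> P (length (dev_hist A) + d)"
    and "\<forall>n<d. \<rho> n = P (length (dev_hist A) + n)" and "0 < d" "own (\<rho> (d - 1)) = i"
    and "(\<rho> (d - 1), P (length (dev_hist A) + d)) \<in> E"
  shows "track_challenger P A = PSt (prefix d \<rho> @ [P (length (dev_hist A) + d)])"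
proof -
  have "(LEAST n. \<rho> n \<noteq> P (length (dev_hist A) + n)) = d"
    using assms(2,3) by (intro Least_equality) (auto simp: not_le[symmetric])
  then show ?thesis unfolding track_challenger_def using assms by (auto simp: Let_def)
qed

lemma track_challenger_cases:
  assumes "last A = CSt \<rho>"
  shows "track_challenger P A = ATop \<or> (\<exists>d. \<rho> d \<noteq> P (length (dev_hist A) + d)
    \<and> track_challenger P A = PSt (prefix d \<rho> @ [P (length (dev_hist A) + d)]))"
proof (cases "\<exists>n. \<rho> n \<noteq> P (length (dev_hist A) + n)")
  case True
  define d where "d = (LEAST n. \<rho> n \<noteq> P (length (dev_hist A) + n))"
  have "\<rho> d \<noteq> P (length (dev_hist A) + d)" unfolding d_def by (rule LeastI_ex[OF True])
  then show ?thesis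
    unfolding track_challenger_def assms using True by (auto simp: d_def[symmetric] Let_def)
qed (simp add: track_challenger_def assms)

lemma valid_C_track_challenger: "valid_C E own mu lam i (track_challenger P)"
  unfolding valid_C_def
proof (intro allI impI)
  fix A :: "'v astate list" assume "A \<noteq> [] \<and> is_chal (last A)"
  then obtain \<rho> where \<rho>: "last A = CSt \<rho>" by (cases "last A") (auto simp: is_chal_def)
  let ?b = "length (dev_hist A)"
  show "abs_step (last A) (track_challenger P A)"
  proof (cases "\<exists>n. \<rho> n \<noteq> P (?b + n)")
    case True
    define d where "d = (LEAST n. \<rho> n \<noteq> P (?b + n))"
    have "\<rho> d \<noteq> P (?b + d)" unfolding d_def by (rule LeastI_ex[OF True])
    moreover have "track_challenger P A = (if 0 < d \<and> own (\<rho> (d - 1)) = i \<and> (\<rho> (d - 1), P (?b + d)) \<in> E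
        then PSt (prefix d \<rho> @ [P (?b + d)]) else ATop)"
      unfolding track_challenger_def \<rho> using True by (simp add: d_def[symmetric] Let_def)
    ultimately show ?thesis unfolding \<rho> abs_trans_def
      by (auto intro!: exI[of _ "d - 1"])
  next
    case False
    then show ?thesis unfolding track_challenger_def \<rho> abs_trans_def by simp
  qed
qed

lemma last_prefix: "0 < c \<Longrightarrow> last (prefix c w) = w (c - 1)"
  by (cases c) (simp_all add: prefix_Suc)

context
  fixes \<tau>P :: "'v astate list \<Rightarrow> 'v astate" and P :: "nat \<Rightarrow> 'v"
  assumes valid_P: "valid_P E own mu lam i \<tau>P" and play: "is_play E P"
    and compat: "compatible_play (\<lambda>_. follow_simulation \<tau>P) P"
    and no_bot: "\<forall>n. abs_play \<tau>P (track_challenger P) (PSt [v0]) n \<noteq> ABot"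
begin

abbreviation track_run :: "nat \<Rightarrow> 'v astate" where
  "track_run \<equiv> abs_play \<tau>P (track_challenger P) (PSt [v0])"

abbreviation devs :: "nat \<Rightarrow> 'v list" where
  "devs c \<equiv> dev_hist (prefix c track_run)"

lemma track_run_step: "abs_step (track_run n) (track_run (Suc n))"
  using abs_play_step[OF valid_P valid_C_track_challenger] .

lemma bot_free_track_run: "bot_free_run track_run"
  unfolding bot_free_run_def using track_run_step no_bot by (simp add: abs_play_0)

lemma track_run_CSt: "track_run n = CSt \<rho> \<Longrightarrow> track_run (Suc n) = track_challenger P (prefix (Suc n) track_run)"
  by (simp add: abs_play_Suc is_chal_def)

lemma track_run_PSt: "track_run n = PSt hv \<Longrightarrow> track_run (Suc n) = \<tau>P (prefix (Suc n) track_run)"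
  by (simp add: abs_play_Suc is_chal_def)

definition tracks :: "nat \<Rightarrow> nat \<Rightarrow> (nat \<Rightarrow> 'v) \<Rightarrow> bool" where
  "tracks m c \<rho> \<longleftrightarrow> simulate \<tau>P (prefix m P) = prefix c track_run \<and> 2 \<le> c \<and> track_run (c - 1) = CSt \<rho>
     \<and> is_play E \<rho> \<and> lam_consistent own mu lam \<rho> \<and> length (devs c) < m \<and> prefix (length (devs c)) P = devs c
     \<and> (\<forall>n. length (devs c) + n < m \<longrightarrow> \<rho> n = P (length (devs c) + n))"

lemma P_0: "P 0 = v0"
  using compat unfolding compatible_play_def by simp

lemma tracks_1: "\<exists>\<rho>. tracks 1 2 \<rho>"
proof -
  have run0: "track_run 0 = PSt [v0]" by (simp add: abs_play_0)
  then have run1: "track_run 1 = \<tau>P [PSt [v0]]" using track_run_PSt[OF run0] by (simp add: prefix_Suc)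
  have "abs_step (PSt [v0]) (track_run 1)" using track_run_step[of 0] run0 by simp
  then have "track_run 1 = ABot \<or> (\<exists>\<rho>. track_run 1 = CSt \<rho> \<and> \<rho> 0 = last [v0] \<and> is_play E \<rho>
      \<and> lam_consistent own mu lam \<rho>)" by (rule abs_step_PSt)
  moreover have "track_run 1 \<noteq> ABot" using no_bot by blast
  ultimately obtain \<rho> where \<rho>: "track_run 1 = CSt \<rho>" "\<rho> 0 = v0" "is_play E \<rho>" "lam_consistent own mu lam \<rho>"
    by auto
  have "simulate \<tau>P (prefix 1 P) = prefix 2 track_run"
    using run0 run1 P_0 by (simp add: prefix_Suc simulate_single numeral_2_eq_2)
  moreover have "devs 2 = []" using run0 \<rho> by (simp add: numeral_2_eq_2 prefix_Suc)
  ultimately show ?thesis unfolding tracks_def using \<rho> P_0 by (intro exI[of _ \<rho>]) simp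
qed

lemma follow_simulation_tracks:
  assumes "tracks m c \<rho>"
  shows "follow_simulation \<tau>P (prefix m P) = \<rho> (m - length (devs c))"
proof -
  let ?b = "length (devs c)"
  have S: "simulate \<tau>P (prefix m P) = prefix c track_run" "2 \<le> c" "track_run (c - 1) = CSt \<rho>"
    "is_play E \<rho>" "?b < m" "\<forall>n. ?b + n < m \<longrightarrow> \<rho> n = P (?b + n)"
    using assms unfolding tracks_def by auto
  have last_sim: "last (simulate \<tau>P (prefix m P)) = CSt \<rho>" using S(1-3) by (simp add: last_prefix)
  have "last (prefix m P) = P (m - 1)" using S(5) by (simp add: last_prefix)
  also have "\<dots> = \<rho> (m - 1 - ?b)" using S(6)[rule_format, of "m - 1 - ?b"] S(5) by simp
  finally have "(last (prefix m P), \<rho> (Suc (m - 1 - ?b))) \<in> E"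
    using S(4) unfolding is_play_def by simp
  moreover have "Suc (m - 1 - ?b) = m - ?b" using S(5) by simp
  ultimately have "(last (prefix m P), \<rho> (m - ?b)) \<in> E" by simp
  then show ?thesis unfolding follow_simulation_def last_sim using S(1) by (simp add: Let_def)
qed

lemma simulate_Suc:
  assumes "tracks m c \<rho>"
  shows "simulate \<tau>P (prefix (Suc m) P) = sim_step \<tau>P (prefix c track_run) m (P m)"
    and "last (prefix c track_run) = CSt \<rho>"
proof -
  have S: "simulate \<tau>P (prefix m P) = prefix c track_run" "2 \<le> c" "track_run (c - 1) = CSt \<rho>"
    "length (devs c) < m"
    using assms unfolding tracks_def by auto
  show "simulate \<tau>P (prefix (Suc m) P) = sim_step \<tau>P (prefix c track_run) m (P m)"
    using simulate_snoc[of "prefix m P" \<tau>P "P m"] S by (simp add: prefix_Suc)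
  show "last (prefix c track_run) = CSt \<rho>" using S by (simp add: last_prefix)
qed

lemma tracks_Suc_agree:
  assumes S: "tracks m c \<rho>" and agree: "P m = \<rho> (m - length (devs c))"
  shows "tracks (Suc m) c \<rho>"
proof -
  let ?b = "length (devs c)"
  have b: "?b < m" "\<forall>n. ?b + n < m \<longrightarrow> \<rho> n = P (?b + n)" using S unfolding tracks_def by auto
  have "simulate \<tau>P (prefix (Suc m) P) = prefix c track_run"
    using simulate_Suc[OF S] agree unfolding sim_step_def by simp
  moreover have "\<rho> n = P (?b + n)" if n: "?b + n < Suc m" for n
  proof (cases "?b + n < m")
    case False
    then have "n = m - ?b" using n by simp
    then show ?thesis using agree b by simp
  qed (use b in blast)
  ultimately show ?thesis using S unfolding tracks_def by simp
qed

lemma track_run_tracked: "tracks m c \<rho> \<Longrightarrow> track_run c = track_challenger P (prefix c track_run)"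
  unfolding tracks_def using track_run_CSt[of "c - 1" \<rho>] by (simp add: Suc_diff_le)

text \<open>A proposal can only leave \<open>P\<close> at a vertex of player \<open>i\<close>: every other player follows the
  current proposal in \<open>P\<close>.\<close>

lemma track_run_deviates:
  assumes S: "tracks m c \<rho>" and dev: "P m \<noteq> \<rho> (m - length (devs c))"
  shows "track_run c = PSt (prefix (m - length (devs c)) \<rho> @ [P m])"
proof -
  let ?b = "length (devs c)"
  have b: "2 \<le> c" "track_run (c - 1) = CSt \<rho>" "?b < m" "\<forall>n. ?b + n < m \<longrightarrow> \<rho> n = P (?b + n)"
    using S unfolding tracks_def by auto
  have bm: "?b + (m - ?b) = m" using b by simp
  have prev: "\<rho> (m - ?b - 1) = P (m - 1)"
    using b(4)[rule_format, of "m - ?b - 1"] b(3) by (simp add: algebra_simps)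
  have m1: "Suc (m - 1) = m" "Suc (m - ?b - 1) = m - ?b" using b(3) by simp_all
  have "own (\<rho> (m - ?b - 1)) = i"
  proof (rule ccontr)
    assume "own (\<rho> (m - ?b - 1)) \<noteq> i"
    then have "own (P (m - 1)) \<noteq> i" using prev by simp
    then have "P (Suc (m - 1)) = follow_simulation \<tau>P (prefix (Suc (m - 1)) P)"
      using compat unfolding compatible_play_def by blast
    then have "P m = follow_simulation \<tau>P (prefix m P)" using m1 by simp
    then show False using follow_simulation_tracks[OF S] dev by simp
  qed
  moreover have "(\<rho> (m - ?b - 1), P (?b + (m - ?b))) \<in> E"
    using play prev m1 bm unfolding is_play_def by metis
  moreover have "track_run c = track_challenger P (prefix c track_run)"
    using track_run_tracked[OF S] .
  moreover have "\<rho> (m - ?b) \<noteq> P (?b + (m - ?b))" "\<forall>n<m - ?b. \<rho> n = P (?b + n)" "0 < m - ?b"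
    using dev b(3,4) bm by auto
  ultimately show ?thesis
    using track_challenger_deviation[OF simulate_Suc(2)[OF S]] m1 bm by simp
qed

lemma tracks_prefix_P:
  assumes S: "tracks m c \<rho>" and k: "length (devs c) + k \<le> m"
  shows "prefix (length (devs c) + k) P = devs c @ prefix k \<rho>"
proof -
  let ?b = "length (devs c)"
  have b: "prefix ?b P = devs c" "\<forall>n. ?b + n < m \<longrightarrow> \<rho> n = P (?b + n)"
    using S unfolding tracks_def by auto
  have "P [?b \<rightarrow> ?b + k] = prefix k \<rho>"
    using b(2) k by (intro nth_equalityI) auto
  then show ?thesis using subsequence_append[where i="?b" and j=k and w=P] b(1) by simp
qed

lemma tracks_Suc_deviate:
  assumes S: "tracks m c \<rho>" and dev: "P m \<noteq> \<rho> (m - length (devs c))"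
  shows "\<exists>\<rho>'. tracks (Suc m) (Suc (Suc c)) \<rho>'"
proof -
  let ?b = "length (devs c)"
  let ?hv = "prefix (m - ?b) \<rho> @ [P m]"
  have b: "?b < m" using S unfolding tracks_def by simp
  have st: "track_run c = PSt ?hv" using track_run_deviates[OF S dev] .
  then have "abs_step (PSt ?hv) (track_run (Suc c))" using track_run_step[of c] by simp
  then have "track_run (Suc c) = ABot \<or> (\<exists>\<rho>'. track_run (Suc c) = CSt \<rho>' \<and> \<rho>' 0 = last ?hv
      \<and> is_play E \<rho>' \<and> lam_consistent own mu lam \<rho>')" by (rule abs_step_PSt)
  then obtain \<rho>' where \<rho>': "track_run (Suc c) = CSt \<rho>'" "\<rho>' 0 = P m" "is_play E \<rho>'"
    "lam_consistent own mu lam \<rho>'"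
    using no_bot by auto
  have "sim_step \<tau>P (prefix c track_run) m (P m) = prefix (Suc (Suc c)) track_run"
    using dev st track_run_PSt[OF st]
    unfolding sim_step_def simulate_Suc(2)[OF S] by (simp add: prefix_Suc Let_def)
  then have "simulate \<tau>P (prefix (Suc m) P) = prefix (Suc (Suc c)) track_run"
    using simulate_Suc(1)[OF S] by simp
  moreover have devs: "devs (Suc (Suc c)) = devs c @ prefix (m - ?b) \<rho>"
    using st \<rho>'(1) by (simp add: prefix_Suc)
  moreover have "prefix m P = devs (Suc (Suc c))"
    using tracks_prefix_P[OF S, of "m - ?b"] b devs by simp
  ultimately show ?thesis unfolding tracks_def using \<rho>' b devs by (intro exI[of _ \<rho>']) simp
qed

lemma tracks_exists: "0 < m \<Longrightarrow> \<exists>c \<rho>. tracks m c \<rho>"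
proof (induct m)
  case (Suc m)
  show ?case
  proof (cases "m = 0")
    case False
    then obtain c \<rho> where S: "tracks m c \<rho>" using Suc by auto
    then show ?thesis using tracks_Suc_agree tracks_Suc_deviate by blast
  qed (use tracks_1 in auto)
qed simp

lemma track_run_after_tracks:
  assumes S: "tracks m c \<rho>"
  shows "track_run c = ATop
    \<or> (\<exists>d. m \<le> length (devs c) + d \<and> track_run c = PSt (prefix d \<rho> @ [P (length (devs c) + d)]))"
proof -
  have agree: "\<forall>n. length (devs c) + n < m \<longrightarrow> \<rho> n = P (length (devs c) + n)"
    using S unfolding tracks_def by auto
  have "track_run c = ATop \<or> (\<exists>d. \<rho> d \<noteq> P (length (devs c) + d)
      \<and> track_run c = PSt (prefix d \<rho> @ [P (length (devs c) + d)]))"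
    using track_challenger_cases[OF simulate_Suc(2)[OF S], of P] track_run_tracked[OF S] by simp
  then show ?thesis using agree not_le by blast
qed

lemma devs_after_ATop:
  assumes "track_run c = ATop" "c \<le> n"
  shows "devs n = devs c"
  using assms(2)
proof (induct n rule: dec_induct)
  case (step n)
  have "\<forall>n. abs_step (track_run n) (track_run (Suc n))" using track_run_step by blast
  then have "track_run n = ATop" using ATop_absorbing assms(1) step(1) by blast
  then show ?case using step by (simp add: prefix_Suc)
qed simp

lemma devs_prefix_P: "devs n = prefix (length (devs n)) P"
proof -
  let ?m = "Suc (length (devs n))"
  obtain c \<rho> where S: "tracks ?m c \<rho>" using tracks_exists by blast
  have Sc: "prefix (length (devs c)) P = devs c" using S unfolding tracks_def by auto
  show ?thesis
  proof (cases "n \<le> c")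
    case True
    have "devs n = take (length (devs n)) (devs c)" using True by (simp add: dev_hist_prefix_mono)
    also have "\<dots> = take (length (devs n)) (prefix (length (devs c)) P)" by (simp only: Sc)
    also have "\<dots> = prefix (length (devs n)) P"
      using length_dev_hist_prefix_mono[OF True, of track_run] by (simp add: min_def)
    finally show ?thesis .
  next
    case False
    from track_run_after_tracks[OF S] show ?thesis
    proof
      assume "track_run c = ATop"
      then have "devs n = devs c" using False by (intro devs_after_ATop) simp_all
      then show ?thesis using Sc by simp
    next
      assume "\<exists>d. ?m \<le> length (devs c) + d \<and> track_run c = PSt (prefix d \<rho> @ [P (length (devs c) + d)])"
      then obtain d where d: "?m \<le> length (devs c) + d" "track_run c = PSt (prefix d \<rho> @ [P (length (devs c) + d)])"
        by blast
      then have "length (devs c) + d \<le> length (devs (Suc c))" by (simp add: prefix_Suc)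
      also have "\<dots> \<le> length (devs n)" using False by (intro length_dev_hist_prefix_mono) simp
      finally show ?thesis using d(1) by simp
    qed
  qed
qed

lemma track_run_accepted:
  assumes k: "track_run k = CSt \<rho>" and top: "\<And>n. track_run n = ATop \<longleftrightarrow> Suc k \<le> n"
  shows "devs k \<frown> \<rho> = P"
proof
  fix x
  let ?bk = "length (devs k)"
  let ?m = "max (Suc x) (Suc ?bk)"
  have dk: "devs (Suc k) = devs k" using k by (simp add: prefix_Suc)
  obtain c \<rho>' where S: "tracks ?m c \<rho>'" using tracks_exists[of ?m] by auto
  have S': "2 \<le> c" "track_run (c - 1) = CSt \<rho>'" "prefix (length (devs c)) P = devs c"
    "\<forall>n. length (devs c) + n < ?m \<longrightarrow> \<rho>' n = P (length (devs c) + n)"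
    using S unfolding tracks_def by auto
  have "c \<le> Suc k"
  proof (rule ccontr)
    assume "\<not> c \<le> Suc k"
    then have "track_run (c - 1) = ATop" using top[of "c - 1"] by simp
    then show False using S'(2) by simp
  qed
  moreover have "\<not> c \<le> k"
  proof
    assume ck: "c \<le> k"
    then have "track_run c \<noteq> ATop" using top[of c] by simp
    then obtain d where d: "?m \<le> length (devs c) + d"
      "track_run c = PSt (prefix d \<rho>' @ [P (length (devs c) + d)])"
      using track_run_after_tracks[OF S] by blast
    then have "length (devs c) + d \<le> length (devs (Suc c))" by (simp add: prefix_Suc)
    also have "\<dots> \<le> ?bk" using ck dk length_dev_hist_prefix_mono[of "Suc c" "Suc k" track_run] by simp
    finally show False using d(1) by simp
  qed
  ultimately have c: "c = Suc k" by simp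
  then have \<rho>: "\<rho>' = \<rho>" and dc: "devs c = devs k" using S'(2) k dk by simp_all
  show "(devs k \<frown> \<rho>) x = P x"
  proof (cases "x < ?bk")
    case True
    then have "(devs k \<frown> \<rho>) x = prefix (length (devs c)) P ! x" using S'(3) dc by simp
    then show ?thesis using True dc by simp
  next
    case False
    then show ?thesis using S'(4) \<rho> dc by simp
  qed
qed

lemma nu_C_track_run: "nu_C mu i track_run = ereal (mu i P)"
proof (cases "\<exists>n. track_run n = ATop")
  case True
  then obtain k \<rho> where "track_run k = CSt \<rho>" "\<And>n. track_run n = ATop \<longleftrightarrow> Suc k \<le> n"
    "nu_C mu i track_run = ereal (mu i (devs k \<frown> \<rho>))"
    using nu_C_accepted[OF bot_free_track_run True] by blast
  then show ?thesis using track_run_accepted by simp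
next
  case False
  then have nt: "\<forall>n. track_run n \<noteq> ATop" by blast
  have "iconcat (devpart track_run) x = P x" for x
  proof -
    obtain n where n: "x < length (devs n)" using dev_hist_unbounded[OF bot_free_track_run nt] by blast
    have "iconcat (devpart track_run) x = devs n ! x"
      using iconcat_devpart_nth[OF dev_hist_unbounded[OF bot_free_track_run nt] n] .
    also have "\<dots> = P x" using arg_cong[OF devs_prefix_P[of n], of "\<lambda>l. l ! x"] n by simp
    finally show ?thesis .
  qed
  then have "iconcat (devpart track_run) = P" by (rule ext)
  then show ?thesis using nu_C_infinite[OF bot_free_track_run nt] by simp
qed

text \<open>Once \<open>P\<close> is generated by the profile \<^const>\<open>follow_simulation\<close> from some position on, it
  never deviates again, so its tail is a suffix of the last proposal, which is \<open>\<lambda>\<close>-consistent.\<close>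

lemma lam_consistent_tail:
  assumes m0: "0 < m0" and follow: "\<forall>x\<ge>m0. P x = follow_simulation \<tau>P (prefix x P)"
  shows "lam_consistent own mu lam (suffix (m0 - 1) P)"
proof -
  obtain c \<rho> where S: "tracks m0 c \<rho>" using tracks_exists[OF m0] by blast
  let ?b = "length (devs c)"
  have all: "tracks x c \<rho>" if "m0 \<le> x" for x
    using that
  proof (induct x rule: dec_induct)
    case (step x)
    have "P x = \<rho> (x - ?b)" using follow step(1) follow_simulation_tracks[OF step(3)] by simp
    then show ?case using tracks_Suc_agree[OF step(3)] by simp
  qed (rule S)
  have b: "?b < m0" "lam_consistent own mu lam \<rho>" using S unfolding tracks_def by auto
  have "suffix (m0 - 1) P = suffix (m0 - 1 - ?b) \<rho>"
  proof
    fix n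
    have "\<rho> (m0 - 1 - ?b + n) = P (?b + (m0 - 1 - ?b + n))"
      using all[of "m0 + n"] b(1) unfolding tracks_def by simp
    then show "suffix (m0 - 1) P n = suffix (m0 - 1 - ?b) \<rho> n" using b(1) by simp
  qed
  then show ?thesis using lam_consistent_suffix[OF b(2)] by simp
qed

end

lemma follow_simulation_rational:
  assumes valid_P: "valid_P E own mu lam i \<tau>P"
    and no_bot: "\<And>P n. abs_play \<tau>P (track_challenger P) (PSt [v0]) n \<noteq> ABot"
  shows "(\<lambda>_. follow_simulation \<tau>P) \<in> lamRat E own mu lam i v0"
proof -
  let ?\<sigma> = "\<lambda>_::'p. follow_simulation \<tau>P"
  have profile: "valid_profile ?\<sigma>" unfolding valid_profile_def using valid_strat_follow_simulation by blast
  have "lam_consistent own mu lam (suffix (length h - 1) (outcome own ?\<sigma> h))"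
    if h: "is_hist E h" "compatible own i ?\<sigma> v0 h" for h
  proof -
    let ?P = "outcome own ?\<sigma> h"
    have "0 < length h" using h unfolding is_hist_def by simp
    moreover have "?P x = follow_simulation \<tau>P (prefix x ?P)" if x: "length h \<le> x" for x
    proof -
      have "x = Suc (x - 1)" using x \<open>0 < length h\<close> by linarith
      moreover have "?P (Suc (x - 1)) = follow_simulation \<tau>P (prefix (Suc (x - 1)) ?P)"
        using calculation x by (intro outcome_step) simp
      ultimately show ?thesis by simp
    qed
    moreover have "compatible_play ?\<sigma> ?P" using compatible_play_outcome[OF profile _ h] by simp
    ultimately show ?thesis
      using lam_consistent_tail[OF valid_P is_play_outcome[OF profile h(1)]] no_bot by blast
  qed
  moreover have "?\<sigma>(i := follow_simulation \<tau>P) = ?\<sigma>" by auto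
  ultimately show ?thesis unfolding lamRat_def using valid_strat_follow_simulation
    by (intro CollectI conjI allI impI exI[of _ "follow_simulation \<tau>P"]) auto
qed

lemma rat_value_le:
  assumes valid_P: "valid_P E own mu lam i \<tau>P"
  shows "(INF \<sigma> \<in> lamRat E own mu lam i v0. SUP \<sigma>i \<in> {\<sigma>i. valid_strat E own i \<sigma>i}.
            ereal (mu i (outcome own (\<sigma>(i := \<sigma>i)) [v0])))
       \<le> (SUP \<tau>C \<in> {\<tau>. valid_C E own mu lam i \<tau>}. nu_C mu i (abs_play \<tau>P \<tau>C (PSt [v0])))"
    (is "_ \<le> ?value")
proof (cases "\<exists>\<tau>C. valid_C E own mu lam i \<tau>C \<and> (\<exists>n. abs_play \<tau>P \<tau>C (PSt [v0]) n = ABot)")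
  case True
  then obtain \<tau>C where "valid_C E own mu lam i \<tau>C" "nu_C mu i (abs_play \<tau>P \<tau>C (PSt [v0])) = \<infinity>"
    using nu_C_ABot by blast
  then have "?value = \<infinity>" by (metis (mono_tags, lifting) SUP_upper mem_Collect_eq top_ereal_def top_unique)
  then show ?thesis by simp
next
  case False
  then have no_bot: "\<And>P n. abs_play \<tau>P (track_challenger P) (PSt [v0]) n \<noteq> ABot"
    using valid_C_track_challenger by blast
  let ?\<sigma> = "\<lambda>_::'p. follow_simulation \<tau>P"
  have "ereal (mu i (outcome own (?\<sigma>(i := \<sigma>i)) [v0])) \<le> ?value" if "valid_strat E own i \<sigma>i" for \<sigma>i
  proof -
    let ?P = "outcome own (?\<sigma>(i := \<sigma>i)) [v0]"
    have profile: "valid_profile (?\<sigma>(i := \<sigma>i))"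
      unfolding valid_profile_def using that valid_strat_follow_simulation by simp
    have start: "is_hist E [v0]" "compatible own i ?\<sigma> v0 [v0]"
      unfolding is_hist_def compatible_def by simp_all
    have "nu_C mu i (abs_play \<tau>P (track_challenger ?P) (PSt [v0])) = ereal (mu i ?P)"
      using nu_C_track_run[OF valid_P is_play_outcome[OF profile start(1)]
          compatible_play_outcome[OF profile _ start]] no_bot by simp
    then show ?thesis using valid_C_track_challenger by (metis (mono_tags, lifting) SUP_upper mem_Collect_eq)
  qed
  then show ?thesis
    using INF_lower[OF follow_simulation_rational[OF valid_P no_bot]] by (blast intro: SUP_least order_trans)
qed

end

theorem mainTheorem7:
  fixes E :: "('v::finite \<times> 'v) set"
    and own :: "'v \<Rightarrow> 'p::finite"
    and mu :: "'p \<Rightarrow> (nat \<Rightarrow> 'v) \<Rightarrow> real"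
    and lam :: "'v \<Rightarrow> ereal"
    and i :: 'p and v0 :: 'v
  assumes "\<forall>v. \<exists>w. (v, w) \<in> E"
    and "\<forall>j. mu j \<in> borel_measurable (PiM UNIV (\<lambda>_. count_space UNIV))"
  shows "(INF \<tau>P \<in> {\<tau>. valid_P E own mu lam i \<tau>}. SUP \<tau>C \<in> {\<tau>. valid_C E own mu lam i \<tau>}.
            nu_C mu i (abs_play \<tau>P \<tau>C (PSt [v0])))
       = (INF \<sigma> \<in> lamRat E own mu lam i v0. SUP \<sigma>i \<in> {\<sigma>i. valid_strat E own i \<sigma>i}.
            ereal (mu i (outcome own (\<sigma>(i := \<sigma>i)) [v0])))"
proof -
  interpret negotiation E own mu lam i v0 by unfold_locales (rule assms(1))
  show ?thesis
    by (intro antisym INF_greatest prover_value_le rat_value_le) simp_all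
qed

end
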